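(* Let $\mathbb{F}_d$ be a field with the discrete topology, let $G$ be an ample Hausdorff groupoid, and let $\sigma\colon G^{(2)} \to \mathbb{F}_d^\times$ be a continuous $2$-cocycle. Let $\Gamma$ be a discrete group with identity $e$, and let $c\colon G \to \Gamma$ be a continuous groupoid homomorphism such that the subgroupoid $G_e := c^{-1}(e)$ is effective. Let $Q$ be a $\Gamma$-graded ring and $\pi\colon A_{\mathbb{F}_d}(G,\sigma) \to Q$ a graded ring homomorphism. Then $\pi$ is injective if and only if $\pi(1_K) \neq 0$ for every nonempty compact open subset $K$ of $G^{(0)}$.
   Context: Groupoids are locally compact Hausdorff topological groupoids; $G$ is ample if it has a basis of compact open bisections; a groupoid $H$ is effective if the interior of $\{\gamma\in H : r(\gamma) = s(\gamma)\}$ equals $H^{(0)}$. A continuous $2$-cocycle is a continuous (locally constant) $\sigma\colon G^{(2)} \to \mathbb{F}_d^\times$ with $\sigma(\alpha,\beta)\sigma(\alpha\beta,\gamma) = \sigma(\alpha,\beta\gamma)\sigma(\beta,\gamma)$ and $\sigma(r(\gamma),\gamma)=1=\sigma(\gamma,s(\gamma))$. $A_{\mathbb{F}_d}(G,\sigma)$ is the algebra of locally constant compactly supported $f\colon G\to\mathbb{F}_d$ with multiplication $(fg)(\gamma) = \sum_{\alpha\beta=\gamma}\sigma(\alpha,\beta)f(\alpha)g(\beta)$. It is $\Gamma$-graded with homogeneous components $A_{\mathbb{F}_d}(G,\sigma)_\gamma = \{f : \{f\neq 0\}\subseteq c^{-1}(\gamma)\}$. A $\Gamma$-graded ring $Q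 = \bigoplus_{\gamma\in\Gamma} Q_\gamma$ has additive subgroups $Q_\gamma$ with $Q_\zeta Q_\eta \subseteq Q_{\zeta\eta}$; a graded homomorphism $\pi$ satisfies $\pi(A_{\mathbb{F}_d}(G,\sigma)_\gamma)\subseteq Q_\gamma$ for all $\gamma$. $1_K$ denotes the indicator function of $K$. *)

theory Defs
  imports "HOL-Analysis.Analysis"
begin

text \<open>A groupoid is modelled on a type 'g (all elements of the type are arrows), with
 range map r, source map s, partial multiplication m (meaningful on composable pairs)
 and inverse i.\<close>

definition comp_pairs :: "('g \<Rightarrow> 'g) \<Rightarrow> ('g \<Rightarrow> 'g) \<Rightarrow> ('g \<times> 'g) set" where
  "comp_pairs r s = {(a, b). s a = r b}"

definition unit_space :: "('g \<Rightarrow> 'g) \<Rightarrow> 'g set" where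
  "unit_space r = {x. r x = x}"

definition groupoid :: "('g \<Rightarrow> 'g) \<Rightarrow> ('g \<Rightarrow> 'g) \<Rightarrow> ('g \<Rightarrow> 'g \<Rightarrow> 'g) \<Rightarrow> ('g \<Rightarrow> 'g) \<Rightarrow> bool" where
  "groupoid r s m i \<longleftrightarrow>
     (\<forall>a b. s a = r b \<longrightarrow> r (m a b) = r a \<and> s (m a b) = s b) \<and>
     (\<forall>a b c. s a = r b \<and> s b = r c \<longrightarrow> m (m a b) c = m a (m b c)) \<and>
     (\<forall>x. m (r x) x = x \<and> m x (s x) = x) \<and>
     (\<forall>x. r (s x) = s x \<and> s (r x) = r x) \<and>
     (\<forall>x. r (i x) = s x \<and> s (i x) = r x) \<and>
     (\<forall>x. m (i x) x = s x \<and> m x (i x) = r x)"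

text \<open>Locally compact Hausdorff topological groupoid (Hausdorff via the class t2_space).\<close>
definition lch_top_groupoid ::
  "('g::t2_space \<Rightarrow> 'g) \<Rightarrow> ('g \<Rightarrow> 'g) \<Rightarrow> ('g \<Rightarrow> 'g \<Rightarrow> 'g) \<Rightarrow> ('g \<Rightarrow> 'g) \<Rightarrow> bool" where
  "lch_top_groupoid r s m i \<longleftrightarrow>
     groupoid r s m i \<and>
     continuous_on (comp_pairs r s) (\<lambda>(a, b). m a b) \<and>
     continuous_on UNIV i \<and>
     locally compact (UNIV :: 'g set)"

definition open_bisection :: "('g::topological_space \<Rightarrow> 'g) \<Rightarrow> ('g \<Rightarrow> 'g) \<Rightarrow> 'g set \<Rightarrow> bool" where
  "open_bisection r s B \<longleftrightarrow> open B \<and>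
     (\<exists>g. homeomorphism B (r ` B) r g) \<and> openin (top_of_set (unit_space r)) (r ` B) \<and>
     (\<exists>g. homeomorphism B (s ` B) s g) \<and> openin (top_of_set (unit_space r)) (s ` B)"

definition ample :: "('g::topological_space \<Rightarrow> 'g) \<Rightarrow> ('g \<Rightarrow> 'g) \<Rightarrow> bool" where
  "ample r s \<longleftrightarrow> topological_basis {B. compact B \<and> open_bisection r s B}"

definition interior_in :: "'a::topological_space set \<Rightarrow> 'a set \<Rightarrow> 'a set" where
  "interior_in H A = \<Union>{U. openin (top_of_set H) U \<and> U \<subseteq> A}"

definition effective_sub :: "('g::topological_space \<Rightarrow> 'g) \<Rightarrow> ('g \<Rightarrow> 'g) \<Rightarrow> 'g set \<Rightarrow> bool" where
  "effective_sub r s H \<longleftrightarrow>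
     interior_in H {x \<in> H. r x = s x} = H \<inter> unit_space r"

text \<open>Continuity into a discrete space = local constancy.\<close>
definition locally_constant_on :: "'a::topological_space set \<Rightarrow> ('a \<Rightarrow> 'b) \<Rightarrow> bool" where
  "locally_constant_on S f \<longleftrightarrow>
     (\<forall>x\<in>S. \<exists>U. openin (top_of_set S) U \<and> x \<in> U \<and> (\<forall>y\<in>U. f y = f x))"

definition cont_2cocycle ::
  "('g::topological_space \<Rightarrow> 'g) \<Rightarrow> ('g \<Rightarrow> 'g) \<Rightarrow> ('g \<Rightarrow> 'g \<Rightarrow> 'g) \<Rightarrow> ('g \<Rightarrow> 'g \<Rightarrow> 'k::field) \<Rightarrow> bool" where
  "cont_2cocycle r s m \<sigma> \<longleftrightarrow>
     locally_constant_on (comp_pairs r s) (\<lambda>(a, b). \<sigma> a b) \<and>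
     (\<forall>(a, b)\<in>comp_pairs r s. \<sigma> a b \<noteq> 0) \<and>
     (\<forall>a b c. s a = r b \<and> s b = r c \<longrightarrow>
        \<sigma> a b * \<sigma> (m a b) c = \<sigma> a (m b c) * \<sigma> b c) \<and>
     (\<forall>x. \<sigma> (r x) x = 1 \<and> \<sigma> x (s x) = 1)"

definition cont_hom ::
  "('g::topological_space \<Rightarrow> 'g) \<Rightarrow> ('g \<Rightarrow> 'g) \<Rightarrow> ('g \<Rightarrow> 'g \<Rightarrow> 'g) \<Rightarrow> ('g \<Rightarrow> 'c::group_add) \<Rightarrow> bool" where
  "cont_hom r s m c \<longleftrightarrow> locally_constant_on UNIV c \<and>
     (\<forall>a b. s a = r b \<longrightarrow> c (m a b) = c a + c b)"

definition steinberg :: "('g::topological_space \<Rightarrow> 'k::field) set" where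
  "steinberg = {f. locally_constant_on UNIV f \<and> compact (closure {x. f x \<noteq> 0})}"

definition twisted_conv ::
  "('g \<Rightarrow> 'g) \<Rightarrow> ('g \<Rightarrow> 'g) \<Rightarrow> ('g \<Rightarrow> 'g \<Rightarrow> 'g) \<Rightarrow> ('g \<Rightarrow> 'g \<Rightarrow> 'k::field)
     \<Rightarrow> ('g \<Rightarrow> 'k) \<Rightarrow> ('g \<Rightarrow> 'k) \<Rightarrow> 'g \<Rightarrow> 'k" where
  "twisted_conv r s m \<sigma> f g x =
     (\<Sum>(a, b)\<in>{(a, b). s a = r b \<and> m a b = x \<and> f a \<noteq> 0 \<and> g b \<noteq> 0}. \<sigma> a b * f a * g b)"

definition steinberg_hom_component :: "('g \<Rightarrow> 'c) \<Rightarrow> 'c \<Rightarrow> ('g::topological_space \<Rightarrow> 'k::field) set" where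
  "steinberg_hom_component c \<gamma> = {f \<in> steinberg. {x. f x \<noteq> 0} \<subseteq> c -` {\<gamma>}}"

text \<open>Gamma-graded ring (Gamma written additively, identity 0): internal direct sum of
 additive subgroups Qg with Qg z * Qg h \<subseteq> Qg (z + h).\<close>
definition graded_ring :: "('c::group_add \<Rightarrow> 'q::ring set) \<Rightarrow> bool" where
  "graded_ring Qg \<longleftrightarrow>
     (\<forall>\<gamma>. 0 \<in> Qg \<gamma> \<and> (\<forall>x\<in>Qg \<gamma>. \<forall>y\<in>Qg \<gamma>. x + y \<in> Qg \<gamma>) \<and> (\<forall>x\<in>Qg \<gamma>. - x \<in> Qg \<gamma>)) \<and>
     (\<forall>\<zeta> \<eta>. \<forall>x\<in>Qg \<zeta>. \<forall>y\<in>Qg \<eta>. x * y \<in> Qg (\<zeta> + \<eta>)) \<and>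
     (\<forall>q. \<exists>!h::'c \<Rightarrow> 'q. finite {\<gamma>. h \<gamma> \<noteq> 0} \<and> (\<forall>\<gamma>. h \<gamma> \<in> Qg \<gamma>) \<and>
           q = (\<Sum>\<gamma>\<in>{\<gamma>. h \<gamma> \<noteq> 0}. h \<gamma>))"

definition graded_ring_hom ::
  "('g::topological_space \<Rightarrow> 'g) \<Rightarrow> ('g \<Rightarrow> 'g) \<Rightarrow> ('g \<Rightarrow> 'g \<Rightarrow> 'g) \<Rightarrow> ('g \<Rightarrow> 'g \<Rightarrow> 'k::field)
    \<Rightarrow> ('g \<Rightarrow> 'c::group_add) \<Rightarrow> ('c \<Rightarrow> 'q::ring set) \<Rightarrow> (('g \<Rightarrow> 'k) \<Rightarrow> 'q) \<Rightarrow> bool" where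
  "graded_ring_hom r s m \<sigma> c Qg \<pi> \<longleftrightarrow>
     (\<forall>f\<in>steinberg. \<forall>g\<in>steinberg. \<pi> (\<lambda>x. f x + g x) = \<pi> f + \<pi> g \<and>
         \<pi> (twisted_conv r s m \<sigma> f g) = \<pi> f * \<pi> g) \<and>
     (\<forall>\<gamma>. \<forall>f\<in>steinberg_hom_component c \<gamma>. \<pi> f \<in> Qg \<gamma>)"

end

theory Submission
  imports Defs
begin

(* If \<pi> is injective it cannot kill the nonzero element 1_K. Conversely, let \<pi> f = 0 with
   f \<noteq> 0. Since \<pi> is graded and Q is the direct sum of its components, \<pi> kills every
   homogeneous component of f, so we may assume f is supported in c^-1(\<gamma>) with f y \<noteq> 0.
   Choose a compact open bisection D around y^-1 on which c, f o inv and \<sigma>(a, a^-1) are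
   constant. All composable products a b with a \<in> D and f b \<noteq> 0 have degree 0, and those
   outside G^(0) form a compact set; effectiveness of c^-1(0) then yields a nonempty compact
   open K \<subseteq> r(D) of units such that none of these non-unit products has range and source
   in K. For such K one computes 1_(D \<inter> r^-1 K) * (f * 1_K) = \<kappa> 1_K with
   \<kappa> = \<sigma>(y^-1, y) f(y) \<noteq> 0, so 1_K lies in the ideal generated by f and \<pi> 1_K = 0. *)

section \<open>Locally constant functions\<close>

lemma locally_constant_on_UNIV_iff:
  "locally_constant_on UNIV f \<longleftrightarrow> (\<forall>x. \<exists>U. open U \<and> x \<in> U \<and> U \<subseteq> f -` {f x})"
  unfolding locally_constant_on_def openin_open_eq[OF open_UNIV] by (simp add: subset_iff Ball_def)

lemma open_fibre_locally_constant:
  assumes "locally_constant_on UNIV f"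
  shows "open (f -` {v})"
  unfolding open_subopen[of "f -` {v}"]
  using assms unfolding locally_constant_on_UNIV_iff by auto

lemma closed_fibre_locally_constant:
  assumes "locally_constant_on UNIV f"
  shows "closed (f -` {v})"
proof -
  have complement: "- f -` {v} = (\<Union>w\<in>- {v}. f -` {w})" by auto
  show ?thesis
    unfolding closed_def complement by (intro open_UN ballI open_fibre_locally_constant[OF assms])
qed

lemma closed_support_locally_constant:
  assumes "locally_constant_on UNIV f"
  shows "closed {x. f x \<noteq> v}"
proof -
  have support: "{x. f x \<noteq> v} = - f -` {v}" by auto
  show ?thesis
    unfolding support by (rule closed_Compl[OF open_fibre_locally_constant[OF assms]])
qed

lemma locally_constant_const: "locally_constant_on UNIV (\<lambda>x. v)"
  unfolding locally_constant_on_UNIV_iff by auto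

lemma locally_constant_combine:
  assumes "locally_constant_on UNIV f" "locally_constant_on UNIV g"
  shows "locally_constant_on UNIV (\<lambda>x. F (f x) (g x))"
  unfolding locally_constant_on_UNIV_iff
proof
  fix x
  obtain U V where "open U" "x \<in> U" "U \<subseteq> f -` {f x}" "open V" "x \<in> V" "V \<subseteq> g -` {g x}"
    using assms unfolding locally_constant_on_UNIV_iff by metis
  moreover have "F (f y) (g y) = F (f x) (g x)" if "y \<in> U \<inter> V" for y
  proof -
    have "f y = f x" "g y = g x" using that calculation by blast+
    then show ?thesis by simp
  qed
  ultimately show "\<exists>W. open W \<and> x \<in> W \<and> W \<subseteq> (\<lambda>x. F (f x) (g x)) -` {F (f x) (g x)}"
    by (intro exI[of _ "U \<inter> V"]) blast
qed

lemma locally_constant_if_clopen: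
  assumes "open C" "closed C" "locally_constant_on UNIV f"
  shows "locally_constant_on UNIV (\<lambda>x. if x \<in> C then f x else 0)"
  unfolding locally_constant_on_UNIV_iff
proof
  fix x
  obtain U where U: "open U" "x \<in> U" "U \<subseteq> f -` {f x}"
    using assms(3) unfolding locally_constant_on_UNIV_iff by blast
  let ?g = "\<lambda>x. if x \<in> C then f x else 0"
  show "\<exists>W. open W \<and> x \<in> W \<and> W \<subseteq> ?g -` {?g x}"
  proof (cases "x \<in> C")
    case True
    then show ?thesis using U assms(1) by (intro exI[of _ "U \<inter> C"]) auto
  next
    case False
    then show ?thesis using assms(2) by (intro exI[of _ "- C"]) auto
  qed
qed

lemma locally_constant_compose_continuous:
  assumes "locally_constant_on S f" "continuous_on UNIV \<phi>" "range \<phi> \<subseteq> S"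
  shows "locally_constant_on UNIV (\<lambda>x. f (\<phi> x))"
  unfolding locally_constant_on_UNIV_iff
proof
  fix x
  obtain U where U: "openin (top_of_set S) U" "\<phi> x \<in> U" "\<forall>y\<in>U. f y = f (\<phi> x)"
    using assms(1,3) unfolding locally_constant_on_def by blast
  then obtain W where W: "open W" "U = S \<inter> W"
    unfolding openin_open by blast
  have "open (\<phi> -` W)"
    using assms(2) W(1) by (simp add: continuous_on_open_vimage)
  moreover have "x \<in> \<phi> -` W" using U(2) W(2) by blast
  moreover have "f (\<phi> y) = f (\<phi> x)" if "y \<in> \<phi> -` W" for y
    using that assms(3) U(3) W(2) by blast
  ultimately show "\<exists>V. open V \<and> x \<in> V \<and> V \<subseteq> (\<lambda>x. f (\<phi> x)) -` {f (\<phi> x)}"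
    by blast
qed

lemma finite_image_compact_locally_constant:
  assumes "locally_constant_on UNIV f" "compact S"
  shows "finite (f ` S)"
proof -
  have "S \<subseteq> (\<Union>v\<in>f ` S. f -` {v})" by blast
  then obtain A where "A \<subseteq> f ` S" "finite A" "S \<subseteq> (\<Union>v\<in>A. f -` {v})"
    using compactE_image[OF assms(2), of "f ` S" "\<lambda>v. f -` {v}"]
      open_fibre_locally_constant[OF assms(1)] by metis
  then have "f ` S \<subseteq> A" by blast
  then show ?thesis using \<open>finite A\<close> finite_subset by blast
qed

section \<open>The Steinberg algebra\<close>

lemma steinberg_iff: "f \<in> steinberg \<longleftrightarrow> locally_constant_on UNIV f \<and> compact {x. f x \<noteq> 0}"
  unfolding steinberg_def using closed_support_locally_constant[of f 0] closure_closed by fastforce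

lemma steinberg_combine:
  assumes "f \<in> steinberg" "g \<in> steinberg" "F 0 0 = 0"
  shows "(\<lambda>x. F (f x) (g x)) \<in> steinberg"
proof -
  have lc: "locally_constant_on UNIV (\<lambda>x. F (f x) (g x))"
    using assms(1,2) by (simp add: steinberg_iff locally_constant_combine)
  have "{x. F (f x) (g x) \<noteq> 0} = ({x. f x \<noteq> 0} \<union> {x. g x \<noteq> 0}) \<inter> {x. F (f x) (g x) \<noteq> 0}"
    using assms(3) by auto
  moreover have "compact (({x. f x \<noteq> 0} \<union> {x. g x \<noteq> 0}) \<inter> {x. F (f x) (g x) \<noteq> 0})"
    using assms(1,2) closed_support_locally_constant[OF lc]
    by (intro compact_Int_closed compact_Un) (auto simp: steinberg_iff)
  ultimately show ?thesis using lc by (simp add: steinberg_iff)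
qed

lemma steinberg_zero: "(\<lambda>x. 0) \<in> steinberg"
  by (simp add: steinberg_iff locally_constant_const)

lemma steinberg_add: "f \<in> steinberg \<Longrightarrow> g \<in> steinberg \<Longrightarrow> (\<lambda>x. f x + g x) \<in> steinberg"
  by (rule steinberg_combine) auto

lemma steinberg_diff: "f \<in> steinberg \<Longrightarrow> g \<in> steinberg \<Longrightarrow> (\<lambda>x. f x - g x) \<in> steinberg"
  by (rule steinberg_combine) auto

lemma steinberg_scale: "f \<in> steinberg \<Longrightarrow> (\<lambda>x. a * f x) \<in> steinberg"
  using steinberg_combine[of f f "\<lambda>u v. a * u"] by simp

lemma steinberg_sum:
  "finite A \<Longrightarrow> (\<And>a. a \<in> A \<Longrightarrow> F a \<in> steinberg) \<Longrightarrow> (\<lambda>x. \<Sum>a\<in>A. F a x) \<in> steinberg"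
  by (induction A rule: finite_induct) (auto intro: steinberg_zero steinberg_add)

lemma steinberg_restrict_clopen:
  assumes "f \<in> steinberg" "open C" "closed C"
  shows "(\<lambda>x. if x \<in> C then f x else 0) \<in> steinberg"
proof -
  have "{x. (if x \<in> C then f x else 0) \<noteq> 0} = {x. f x \<noteq> 0} \<inter> C" by auto
  then show ?thesis
    using assms by (simp add: steinberg_iff locally_constant_if_clopen compact_Int_closed)
qed

lemma indicator_in_steinberg:
  assumes "compact K" "open K"
  shows "(indicator K :: 'g::t2_space \<Rightarrow> 'k::field) \<in> steinberg"
proof -
  have indicator_eq: "(indicator K :: 'g \<Rightarrow> 'k) = (\<lambda>x. if x \<in> K then 1 else 0)"
    by (auto simp: indicator_def)
  have "locally_constant_on UNIV (\<lambda>x. if x \<in> K then (1::'k) else 0)"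
    by (rule locally_constant_if_clopen[OF assms(2) compact_imp_closed[OF assms(1)]
          locally_constant_const])
  moreover have "{x. (if x \<in> K then (1::'k) else 0) \<noteq> 0} = K" by auto
  ultimately show ?thesis using assms(1) unfolding indicator_eq steinberg_iff by simp
qed

section \<open>Groupoids\<close>

locale algebraic_groupoid =
  fixes r s :: "'g \<Rightarrow> 'g" and m :: "'g \<Rightarrow> 'g \<Rightarrow> 'g" and i :: "'g \<Rightarrow> 'g"
  assumes groupoid: "groupoid r s m i"
begin

lemma range_mult: "s a = r b \<Longrightarrow> r (m a b) = r a"
  and source_mult: "s a = r b \<Longrightarrow> s (m a b) = s b"
  and mult_assoc: "s a = r b \<Longrightarrow> s b = r d \<Longrightarrow> m (m a b) d = m a (m b d)"
  and mult_range: "m (r x) x = x"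
  and mult_source: "m x (s x) = x"
  and range_source: "r (s x) = s x"
  and source_range: "s (r x) = r x"
  and range_inv: "r (i x) = s x"
  and source_inv: "s (i x) = r x"
  and inv_mult: "m (i x) x = s x"
  and mult_inv: "m x (i x) = r x"
  using groupoid unfolding groupoid_def by blast+

lemma unit_space_iff: "x \<in> unit_space r \<longleftrightarrow> r x = x"
  by (simp add: unit_space_def)

lemma range_range: "r (r x) = r x"
  by (metis range_source source_range)

lemma range_in_unit_space: "r x \<in> unit_space r"
  by (simp add: unit_space_iff range_range)

lemma source_unit: "r u = u \<Longrightarrow> s u = u"
  by (metis source_range)

lemma mult_unit_right: "s a = r b \<Longrightarrow> r b = b \<Longrightarrow> m a b = a"
  by (metis mult_source)

lemma mult_cancel_left:
  assumes "s a = r b"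
  shows "m (i a) (m a b) = b"
proof -
  have "m (i a) (m a b) = m (m (i a) a) b"
    using assms by (simp add: mult_assoc source_inv)
  also have "\<dots> = b"
    using assms by (simp add: inv_mult mult_range)
  finally show ?thesis .
qed

lemma inv_inv: "i (i x) = x"
proof -
  have "x = m (i (i x)) (m (i x) x)"
    by (simp add: mult_cancel_left source_inv)
  also have "\<dots> = m (i (i x)) (s (i (i x)))"
    by (simp add: inv_mult source_inv range_inv)
  also have "\<dots> = i (i x)"
    by (rule mult_source)
  finally show ?thesis by simp
qed

lemma translate_left:
  assumes "r a = r x"
  shows "s a = r (m (i a) x)" and "m a (m (i a) x) = x"
proof -
  have composable: "s (i a) = r x"
    using assms by (simp add: source_inv)
  show "s a = r (m (i a) x)"
    using composable by (simp add: range_mult range_inv)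
  have "m a (m (i a) x) = m (m a (i a)) x"
    using composable by (simp add: mult_assoc range_inv)
  also have "\<dots> = x"
    using assms by (simp add: mult_inv mult_range)
  finally show "m a (m (i a) x) = x" .
qed

lemma hom_unit:
  assumes hom: "\<And>a b. s a = r b \<Longrightarrow> c (m a b) = c a + c b" and "r u = u"
  shows "c u = (0::'c::group_add)"
proof -
  have "m u u = u" "s u = r u"
    using \<open>r u = u\<close> by (metis mult_range, metis source_unit)
  then have "c u = c u + c u"
    using hom[of u u] by simp
  then show ?thesis
    using add_left_imp_eq[OF trans[OF add.right_neutral]] by metis
qed

lemma hom_inv_add:
  assumes hom: "\<And>a b. s a = r b \<Longrightarrow> c (m a b) = c a + c b"
  shows "c (i x) + c x = (0::'c::group_add)"
proof -
  have "c (i x) + c x = c (m (i x) x)"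
    using hom[of "i x" x] by (simp add: source_inv)
  also have "\<dots> = c (s x)"
    by (simp add: inv_mult)
  also have "\<dots> = 0"
    using hom range_source by (rule hom_unit)
  finally show ?thesis .
qed

end

locale ample_groupoid =
  fixes r s :: "'g::t2_space \<Rightarrow> 'g" and m :: "'g \<Rightarrow> 'g \<Rightarrow> 'g" and i :: "'g \<Rightarrow> 'g"
  assumes topological_groupoid: "lch_top_groupoid r s m i"
    and ample: "ample r s"

sublocale ample_groupoid \<subseteq> algebraic_groupoid r s m i
proof
  show "groupoid r s m i"
    using topological_groupoid by (simp add: lch_top_groupoid_def)
qed

context ample_groupoid
begin

lemma continuous_inv: "continuous_on UNIV i"
  and continuous_mult: "continuous_on (comp_pairs r s) (\<lambda>(a, b). m a b)"
  using topological_groupoid unfolding lch_top_groupoid_def by blast+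

lemma continuous_range: "continuous_on UNIV r"
proof -
  have "continuous_on UNIV (\<lambda>x. (\<lambda>(a, b). m a b) (x, i x))"
    by (rule continuous_on_compose2[OF continuous_mult])
       (auto intro!: continuous_intros continuous_inv simp: comp_pairs_def range_inv)
  then show ?thesis by (simp add: mult_inv)
qed

lemma continuous_source: "continuous_on UNIV s"
proof -
  have "continuous_on UNIV (\<lambda>x. (\<lambda>(a, b). m a b) (i x, x))"
    by (rule continuous_on_compose2[OF continuous_mult])
       (auto intro!: continuous_intros continuous_inv simp: comp_pairs_def source_inv)
  then show ?thesis by (simp add: inv_mult)
qed

lemma open_vimage_range: "open U \<Longrightarrow> open (r -` U)"
  and open_vimage_source: "open U \<Longrightarrow> open (s -` U)"
  and closed_vimage_range: "closed U \<Longrightarrow> closed (r -` U)"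
  and closed_vimage_source: "closed U \<Longrightarrow> closed (s -` U)"
  using continuous_range continuous_source
    continuous_on_open_vimage[OF open_UNIV] continuous_on_closed_vimage[OF closed_UNIV]
  by auto

lemma closed_comp_pairs: "closed (comp_pairs r s)"
proof -
  have "closed {p. s (fst p) = r (snd p)}"
    by (rule closed_Collect_eq)
       (auto intro!: continuous_on_compose2[OF continuous_source]
          continuous_on_compose2[OF continuous_range] continuous_intros)
  moreover have "comp_pairs r s = {p. s (fst p) = r (snd p)}"
    by (auto simp: comp_pairs_def)
  ultimately show ?thesis by simp
qed

lemma obtain_compact_open_bisection:
  assumes "open U" "x \<in> U"
  obtains B where "compact B" "open_bisection r s B" "x \<in> B" "B \<subseteq> U"
proof -
  have "topological_basis {B. compact B \<and> open_bisection r s B}"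
    using ample unfolding ample_def .
  then obtain B where "B \<in> {B. compact B \<and> open_bisection r s B}" "x \<in> B" "B \<subseteq> U"
    using assms by (rule topological_basisE)
  then show ?thesis using that by blast
qed

lemma open_bisection_open: "open_bisection r s B \<Longrightarrow> open B"
  unfolding open_bisection_def by blast

lemma inj_on_range_bisection: "open_bisection r s B \<Longrightarrow> inj_on r B"
  unfolding open_bisection_def homeomorphism_def by (metis inj_on_inverseI)

lemma open_unit_space: "open (unit_space r)"
  unfolding open_subopen[of "unit_space r"]
proof
  fix x assume x: "x \<in> unit_space r"
  obtain B where B: "open_bisection r s B" "x \<in> B"
    using obtain_compact_open_bisection[of UNIV x] by blast
  have "open (B \<inter> r -` B)"
    using open_bisection_open[OF B(1)] open_vimage_range by blast
  moreover have "B \<inter> r -` B \<subseteq> unit_space r"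
  proof
    fix y assume y: "y \<in> B \<inter> r -` B"
    have "r (r y) = r y"
      using range_in_unit_space unit_space_iff by blast
    then have "r y = y"
      using y inj_on_range_bisection[OF B(1)] by (auto dest: inj_onD)
    then show "y \<in> unit_space r" by (simp add: unit_space_iff)
  qed
  moreover have "x \<in> B \<inter> r -` B"
    using x B(2) by (simp add: unit_space_iff)
  ultimately show "\<exists>T. open T \<and> x \<in> T \<and> T \<subseteq> unit_space r" by blast
qed

lemma closed_unit_space: "closed (unit_space r)"
proof -
  have "closed {x. r x = id x}"
    by (rule closed_Collect_eq) (auto intro: continuous_range continuous_on_id)
  then show ?thesis by (simp add: unit_space_def)
qed

lemma open_range_bisection: "open_bisection r s B \<Longrightarrow> open (r ` B)"
  using openin_open_trans open_unit_space unfolding open_bisection_def by blast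

(* Either V meets r(B) only in isotropy, which effectiveness rules out since B has no units,
   or some r b \<in> V differs from s b, and separating r b from s b shrinks V suitably. *)
lemma effective_avoid_bisection:
  assumes eff: "effective_sub r s H"
    and B: "open_bisection r s B" "B \<subseteq> H - unit_space r"
    and V: "open V" "V \<noteq> {}"
  obtains V' where "open V'" "V' \<noteq> {}" "V' \<subseteq> V" "\<forall>b\<in>B. \<not> (r b \<in> V' \<and> s b \<in> V')"
proof (cases "\<forall>b\<in>B. r b \<in> V \<longrightarrow> r b = s b")
  case True
  have "open (B \<inter> r -` V)"
    using open_bisection_open[OF B(1)] open_vimage_range[OF V(1)] by blast
  moreover have "B \<inter> r -` V = H \<inter> (B \<inter> r -` V)"
    using B(2) by blast
  ultimately have "openin (top_of_set H) (B \<inter> r -` V)"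
    unfolding openin_open by blast
  moreover have "B \<inter> r -` V \<subseteq> {x \<in> H. r x = s x}"
    using True B(2) by blast
  ultimately have "B \<inter> r -` V \<subseteq> interior_in H {x \<in> H. r x = s x}"
    unfolding interior_in_def by blast
  then have "B \<inter> r -` V \<subseteq> H \<inter> unit_space r"
    using eff unfolding effective_sub_def by simp
  then have "\<forall>b\<in>B. \<not> (r b \<in> V \<and> s b \<in> V)"
    using B(2) by blast
  then show ?thesis using V that[of V] by blast
next
  case False
  then obtain b where b: "b \<in> B" "r b \<in> V" "r b \<noteq> s b" by blast
  obtain W1 W2 where W: "open W1" "open W2" "r b \<in> W1" "s b \<in> W2" "W1 \<inter> W2 = {}"
    using separation_t2[THEN iffD1, OF b(3)] by blast
  obtain g where "homeomorphism B (r ` B) r g"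
    using B(1) unfolding open_bisection_def by blast
  then have g_cont: "continuous_on (r ` B) g" and g_r: "\<And>x. x \<in> B \<Longrightarrow> g (r x) = x"
    unfolding homeomorphism_def by auto
  define V' where "V' = V \<inter> W1 \<inter> (g -` (s -` W2) \<inter> r ` B)"
  have "open (g -` (s -` W2) \<inter> r ` B)"
    using g_cont open_range_bisection[OF B(1)] open_vimage_source[OF W(2)]
    by (simp add: continuous_on_open_vimage)
  then have "open V'"
    unfolding V'_def using V(1) W(1) by blast
  moreover have "r b \<in> V'"
    unfolding V'_def using b W g_r by auto
  moreover have "\<not> (r b' \<in> V' \<and> s b' \<in> V')" if "b' \<in> B" for b'
  proof
    assume "r b' \<in> V' \<and> s b' \<in> V'"
    then have "s (g (r b')) \<in> W2" "s b' \<in> W1"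
      unfolding V'_def by auto
    then show False using g_r[OF that] W(5) by auto
  qed
  moreover have "V' \<subseteq> V" unfolding V'_def by blast
  ultimately show ?thesis using that by blast
qed

lemma effective_avoid_bisections:
  assumes eff: "effective_sub r s H" and "finite \<B>"
    and "\<And>B. B \<in> \<B> \<Longrightarrow> open_bisection r s B \<and> B \<subseteq> H - unit_space r"
    and V: "open V" "V \<noteq> {}"
  shows "\<exists>V'. open V' \<and> V' \<noteq> {} \<and> V' \<subseteq> V \<and> (\<forall>x\<in>\<Union>\<B>. \<not> (r x \<in> V' \<and> s x \<in> V'))"
  using assms(2,3)
proof (induction \<B> rule: finite_induct)
  case empty
  show ?case using V by (intro exI[of _ V]) simp
next
  case (insert B \<B>)
  have "\<exists>V'. open V' \<and> V' \<noteq> {} \<and> V' \<subseteq> V \<and> (\<forall>x\<in>\<Union>\<B>. \<not> (r x \<in> V' \<and> s x \<in> V'))"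
    by (rule insert.IH) (use insert.prems in blast)
  then obtain V1 where V1: "open V1" "V1 \<noteq> {}" "V1 \<subseteq> V"
    "\<forall>x\<in>\<Union>\<B>. \<not> (r x \<in> V1 \<and> s x \<in> V1)"
    by blast
  have "open_bisection r s B" "B \<subseteq> H - unit_space r"
    using insert.prems by blast+
  then obtain V2 where "open V2" "V2 \<noteq> {}" "V2 \<subseteq> V1" "\<forall>b\<in>B. \<not> (r b \<in> V2 \<and> s b \<in> V2)"
    using effective_avoid_bisection[OF eff _ _ V1(1,2)] by blast
  then show ?case using V1 by (intro exI[of _ V2]) blast
qed

lemma effective_avoid_compact:
  assumes eff: "effective_sub r s H" and "open H" "compact M" "M \<subseteq> H - unit_space r"
    and V: "open V" "V \<noteq> {}"
  obtains V' where "open V'" "V' \<noteq> {}" "V' \<subseteq> V" "\<And>x. x \<in> M \<Longrightarrow> \<not> (r x \<in> V' \<and> s x \<in> V')"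
proof -
  let ?\<B> = "{B. open_bisection r s B \<and> B \<subseteq> H - unit_space r}"
  have "open (H - unit_space r)"
    using \<open>open H\<close> closed_unit_space by blast
  have "M \<subseteq> \<Union>?\<B>"
  proof
    fix x assume "x \<in> M"
    then obtain B where "open_bisection r s B" "x \<in> B" "B \<subseteq> H - unit_space r"
      using assms(4) obtain_compact_open_bisection[OF \<open>open (H - unit_space r)\<close>] by blast
    then show "x \<in> \<Union>?\<B>" by blast
  qed
  moreover have "\<And>B. B \<in> ?\<B> \<Longrightarrow> open B"
    using open_bisection_open by blast
  ultimately obtain \<B> where \<B>: "\<B> \<subseteq> ?\<B>" "finite \<B>" "M \<subseteq> \<Union>\<B>"
    by (rule compactE[OF assms(3)])
  have "\<And>B. B \<in> \<B> \<Longrightarrow> open_bisection r s B \<and> B \<subseteq> H - unit_space r"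
    using \<B>(1) by blast
  then obtain V' where "open V'" "V' \<noteq> {}" "V' \<subseteq> V" "\<forall>x\<in>\<Union>\<B>. \<not> (r x \<in> V' \<and> s x \<in> V')"
    using effective_avoid_bisections[OF eff \<B>(2) _ V] by blast
  then show ?thesis
    using that \<B>(3) by blast
qed

lemma effective_avoid_products:
  assumes eff: "effective_sub r s H" and "open H" "compact D" "compact S"
    and products: "\<And>a b. a \<in> D \<Longrightarrow> b \<in> S \<Longrightarrow> s a = r b \<Longrightarrow> m a b \<in> H"
    and V: "open V" "V \<noteq> {}"
  obtains V' where "open V'" "V' \<noteq> {}" "V' \<subseteq> V"
    "\<And>a b. a \<in> D \<Longrightarrow> b \<in> S \<Longrightarrow> s a = r b \<Longrightarrow> r a \<in> V' \<Longrightarrow> s b \<in> V' \<Longrightarrow> m a b \<in> unit_space r"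
proof -
  define M where "M = (\<lambda>(a, b). m a b) ` ((D \<times> S) \<inter> comp_pairs r s) - unit_space r"
  have "compact ((D \<times> S) \<inter> comp_pairs r s)"
    using compact_Times[OF assms(3,4)] closed_comp_pairs by (rule compact_Int_closed)
  then have "compact ((\<lambda>(a, b). m a b) ` ((D \<times> S) \<inter> comp_pairs r s))"
    using continuous_on_subset[OF continuous_mult Int_lower2] by (intro compact_continuous_image)
  then have "compact M"
    unfolding M_def using open_unit_space by (rule compact_diff)
  moreover have "M \<subseteq> H - unit_space r"
    using products by (auto simp: M_def comp_pairs_def)
  ultimately obtain V' where V': "open V'" "V' \<noteq> {}" "V' \<subseteq> V"
    "\<And>x. x \<in> M \<Longrightarrow> \<not> (r x \<in> V' \<and> s x \<in> V')"
    using effective_avoid_compact[OF eff \<open>open H\<close> _ _ V] by blast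
  have "m a b \<in> unit_space r"
    if "a \<in> D" "b \<in> S" "s a = r b" "r a \<in> V'" "s b \<in> V'" for a b
  proof (rule ccontr)
    assume "m a b \<notin> unit_space r"
    then have "m a b \<in> M"
      using that by (force simp: M_def comp_pairs_def)
    moreover have "r (m a b) \<in> V'" "s (m a b) \<in> V'"
      using that by (simp_all add: range_mult source_mult)
    ultimately show False using V'(4) by blast
  qed
  then show ?thesis using V' that by blast
qed

end

section \<open>Twisted convolution\<close>

lemma twisted_conv_eq_single:
  assumes "s a0 = r b0" "m a0 b0 = x"
    and "\<And>a b. s a = r b \<Longrightarrow> m a b = x \<Longrightarrow> f a \<noteq> 0 \<Longrightarrow> g b \<noteq> 0 \<Longrightarrow> a = a0 \<and> b = b0"
  shows "twisted_conv r s m \<sigma> f g x = \<sigma> a0 b0 * f a0 * g b0"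
proof -
  have "{(a, b). s a = r b \<and> m a b = x \<and> f a \<noteq> 0 \<and> g b \<noteq> 0} \<subseteq> {(a0, b0)}"
    using assms(3) by auto
  then have "twisted_conv r s m \<sigma> f g x = (\<Sum>(a, b)\<in>{(a0, b0)}. \<sigma> a b * f a * g b)"
    unfolding twisted_conv_def using assms(1,2) by (intro sum.mono_neutral_left) auto
  then show ?thesis by simp
qed

lemma twisted_conv_eq_0:
  assumes "\<And>a b. s a = r b \<Longrightarrow> m a b = x \<Longrightarrow> f a \<noteq> 0 \<Longrightarrow> g b \<noteq> 0 \<Longrightarrow> False"
  shows "twisted_conv r s m \<sigma> f g x = 0"
proof -
  have no_pairs: "{(a, b). s a = r b \<and> m a b = x \<and> f a \<noteq> 0 \<and> g b \<noteq> 0} = {}"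
    using assms by auto
  show ?thesis unfolding twisted_conv_def no_pairs by simp
qed

locale twisted_ample_groupoid = ample_groupoid r s m i
  for r s :: "'g::t2_space \<Rightarrow> 'g" and m :: "'g \<Rightarrow> 'g \<Rightarrow> 'g" and i :: "'g \<Rightarrow> 'g" +
  fixes \<sigma> :: "'g \<Rightarrow> 'g \<Rightarrow> 'k::field"
  assumes cocycle: "cont_2cocycle r s m \<sigma>"
begin

abbreviation conv :: "('g \<Rightarrow> 'k) \<Rightarrow> ('g \<Rightarrow> 'k) \<Rightarrow> 'g \<Rightarrow> 'k" (infixl "\<star>" 70)
  where "f \<star> g \<equiv> twisted_conv r s m \<sigma> f g"

lemma cocycle_locally_constant: "locally_constant_on (comp_pairs r s) (\<lambda>(a, b). \<sigma> a b)"
  and cocycle_nonzero: "s a = r b \<Longrightarrow> \<sigma> a b \<noteq> 0"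
  and cocycle_source: "\<sigma> x (s x) = 1"
  using cocycle unfolding cont_2cocycle_def comp_pairs_def by blast+

lemma locally_constant_cocycle_inv: "locally_constant_on UNIV (\<lambda>a. \<sigma> a (i a))"
proof -
  have "locally_constant_on UNIV (\<lambda>a. (\<lambda>(a, b). \<sigma> a b) (a, i a))"
    by (rule locally_constant_compose_continuous[OF cocycle_locally_constant])
       (auto intro!: continuous_intros continuous_inv simp: comp_pairs_def range_inv)
  then show ?thesis by simp
qed

lemma conv_right_unit_supported:
  assumes "\<And>x. g x \<noteq> 0 \<Longrightarrow> x \<in> unit_space r"
  shows "f \<star> g = (\<lambda>x. f x * g (s x))"
proof
  fix x
  have "(f \<star> g) x = \<sigma> x (s x) * f x * g (s x)"
  proof (rule twisted_conv_eq_single)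
    show "s x = r (s x)" by (simp add: range_source)
    show "m x (s x) = x" by (rule mult_source)
    fix a b assume ab: "s a = r b" "m a b = x" "f a \<noteq> 0" "g b \<noteq> 0"
    then have "r b = b" using assms unit_space_iff by blast
    then show "a = x \<and> b = s x" using ab(1,2) by (metis mult_unit_right)
  qed
  then show "(f \<star> g) x = f x * g (s x)" by (simp add: cocycle_source)
qed

lemma conv_indicator_bisection:
  assumes "inj_on r D" "a \<in> D" "r a = r x"
  shows "(indicator D \<star> g) x = \<sigma> a (m (i a) x) * g (m (i a) x)"
proof -
  have "(indicator D \<star> g) x = \<sigma> a (m (i a) x) * indicator D a * g (m (i a) x)"
  proof (rule twisted_conv_eq_single)
    show "s a = r (m (i a) x)" "m a (m (i a) x) = x"
      using translate_left[OF assms(3)] by auto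
    fix a' b assume ab: "s a' = r b" "m a' b = x" "indicator D a' \<noteq> (0::'k)" "g b \<noteq> 0"
    then have "a' \<in> D" "r a' = r x"
      by (metis indicator_simps(2), metis range_mult)
    then have "a' = a" using assms by (metis inj_onD)
    moreover have "b = m (i a') x" using mult_cancel_left ab(1,2) by metis
    ultimately show "a' = a \<and> b = m (i a) x" by simp
  qed
  then show ?thesis using assms(2) by simp
qed

lemma conv_indicator_outside:
  assumes "r x \<notin> r ` D"
  shows "(indicator D \<star> g) x = 0"
proof (rule twisted_conv_eq_0)
  fix a b assume "s a = r b" "m a b = x" "indicator D a \<noteq> (0::'k)" "g b \<noteq> 0"
  then have "a \<in> D" "r x = r a" by (metis indicator_simps(2), metis range_mult)
  then show False using assms by blast
qed

lemma conv_indicator_unit_right: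
  assumes "K \<subseteq> unit_space r"
  shows "f \<star> indicator K = (\<lambda>x. f x * indicator K (s x))"
  using assms by (intro conv_right_unit_supported) (metis indicator_simps(2) subsetD)

lemma conv_scaled_unit_indicators:
  assumes "K \<subseteq> unit_space r"
  shows "(\<lambda>x. a * indicator K x) \<star> (\<lambda>x. b * indicator K x) = (\<lambda>x. a * b * indicator K x)"
proof -
  have "(\<lambda>x. a * indicator K x) \<star> (\<lambda>x. b * indicator K x)
      = (\<lambda>x. a * indicator K x * (b * indicator K (s x)))"
    using assms by (intro conv_right_unit_supported) (metis indicator_simps(2) mult_zero_right subsetD)
  moreover have "s x = x" if "x \<in> K" for x
    using assms that source_unit unit_space_iff by blast
  ultimately show ?thesis by (auto simp: fun_eq_iff split: split_indicator)
qed

lemma conv_bisection_scaled_indicator: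
  assumes inj: "inj_on r D" and "K \<subseteq> r ` D" "K \<subseteq> unit_space r"
    and inverse_value: "\<And>a. a \<in> D \<Longrightarrow> \<sigma> a (i a) * h (i a) = \<kappa>"
    and isotropy: "\<And>a b. a \<in> D \<Longrightarrow> s a = r b \<Longrightarrow> h b \<noteq> 0 \<Longrightarrow> r a \<in> K \<Longrightarrow> s b \<in> K
      \<Longrightarrow> m a b \<in> unit_space r"
  shows "indicator (D \<inter> r -` K) \<star> (h \<star> indicator K) = (\<lambda>x. \<kappa> * indicator K x)"
proof
  fix x
  have inj': "inj_on r (D \<inter> r -` K)"
    using inj by (rule inj_on_subset) blast
  have right: "h \<star> indicator K = (\<lambda>y. h y * indicator K (s y))"
    using assms(3) by (rule conv_indicator_unit_right)
  consider (unit) "x \<in> K"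
    | (translate) "x \<notin> K" "r x \<in> r ` (D \<inter> r -` K)"
    | (outside) "x \<notin> K" "r x \<notin> r ` (D \<inter> r -` K)"
    by blast
  then show "(indicator (D \<inter> r -` K) \<star> (h \<star> indicator K)) x = \<kappa> * indicator K x"
  proof cases
    case unit
    then obtain a where a: "a \<in> D" "r a = x"
      using assms(2) by blast
    have "a \<in> D \<inter> r -` K" "r a = r x"
      using a unit by (auto simp: range_range)
    moreover have "m (i a) x = i a"
      using a(2) by (metis mult_source source_inv)
    moreover have "s (i a) \<in> K"
      using a unit by (simp add: source_inv)
    ultimately have "(indicator (D \<inter> r -` K) \<star> (h \<star> indicator K)) x = \<sigma> a (i a) * h (i a)"
      using conv_indicator_bisection[OF inj', of a x "h \<star> indicator K"] by (simp add: right)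
    then show ?thesis
      using inverse_value[OF a(1)] unit by simp
  next
    case translate
    then obtain a where a: "a \<in> D \<inter> r -` K" "r a = r x"
      by (metis imageE)
    define b where "b = m (i a) x"
    have ab: "s a = r b" "m a b = x"
      using translate_left[OF a(2)] by (simp_all add: b_def)
    have "h b * indicator K (s b) = 0"
    proof (rule ccontr)
      assume "h b * indicator K (s b) \<noteq> 0"
      then have "h b \<noteq> 0" "s b \<in> K"
        by (metis mult_zero_left, metis indicator_simps(2) mult_zero_right)
      then have "x \<in> unit_space r"
        using isotropy[of a b] a(1) ab by auto
      then have "x \<in> K"
        using a unit_space_iff by auto
      then show False using translate(1) by simp
    qed
    then have "(indicator (D \<inter> r -` K) \<star> (h \<star> indicator K)) x = 0"
      using conv_indicator_bisection[OF inj' a, of "h \<star> indicator K"] by (simp add: right b_def)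
    then show ?thesis
      using translate(1) by simp
  next
    case outside
    then show ?thesis using conv_indicator_outside by simp
  qed
qed

lemma obtain_bisection_around_inverse:
  assumes "locally_constant_on UNIV c" "locally_constant_on UNIV h"
  obtains D where "compact D" "open_bisection r s D" "i y \<in> D"
    "\<And>a. a \<in> D \<Longrightarrow> c a = c (i y)"
    "\<And>a. a \<in> D \<Longrightarrow> \<sigma> a (i a) * h (i a) = \<sigma> (i y) y * h y"
proof -
  define U where
    "U = c -` {c (i y)} \<inter> (\<lambda>a. h (i a)) -` {h y} \<inter> (\<lambda>a. \<sigma> a (i a)) -` {\<sigma> (i y) y}"
  have "open U"
    unfolding U_def
    using assms locally_constant_compose_continuous[OF assms(2) continuous_inv subset_UNIV]
      locally_constant_cocycle_inv
    by (intro open_Int open_fibre_locally_constant)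
  moreover have "i y \<in> U"
    unfolding U_def by (simp add: inv_inv)
  ultimately obtain D where D: "compact D" "open_bisection r s D" "i y \<in> D" "D \<subseteq> U"
    by (rule obtain_compact_open_bisection)
  have D_props: "c a = c (i y)" "\<sigma> a (i a) * h (i a) = \<sigma> (i y) y * h y" if "a \<in> D" for a
  proof -
    have "a \<in> U" using D(4) that by blast
    then show "c a = c (i y)" "\<sigma> a (i a) * h (i a) = \<sigma> (i y) y * h y"
      by (simp_all add: U_def)
  qed
  show ?thesis
    using D(1-3) D_props by (rule that)
qed

lemma obtain_isotropy_free_unit_set:
  assumes hom: "cont_hom r s m c" and eff: "effective_sub r s (c -` {0})"
    and h: "h \<in> steinberg_hom_component c \<gamma>" "h y \<noteq> 0"
  obtains D K where "open_bisection r s D" "compact D" "compact K" "open K" "K \<noteq> {}"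
    "K \<subseteq> r ` D" "K \<subseteq> unit_space r"
    "\<And>a. a \<in> D \<Longrightarrow> \<sigma> a (i a) * h (i a) = \<sigma> (i y) y * h y"
    "\<And>a b. a \<in> D \<Longrightarrow> s a = r b \<Longrightarrow> h b \<noteq> 0 \<Longrightarrow> r a \<in> K \<Longrightarrow> s b \<in> K
      \<Longrightarrow> m a b \<in> unit_space r"
proof -
  have c_mult: "\<And>a b. s a = r b \<Longrightarrow> c (m a b) = c a + c b"
    and c_lc: "locally_constant_on UNIV c"
    using hom unfolding cont_hom_def by blast+
  have h_lc: "locally_constant_on UNIV h" and h_supp: "compact {x. h x \<noteq> 0}"
    and h_deg: "\<And>x. h x \<noteq> 0 \<Longrightarrow> c x = \<gamma>"
    using h(1) unfolding steinberg_hom_component_def steinberg_iff by auto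
  obtain D where D: "compact D" "open_bisection r s D" "i y \<in> D"
    and D_deg: "\<And>a. a \<in> D \<Longrightarrow> c a = c (i y)"
    and D_value: "\<And>a. a \<in> D \<Longrightarrow> \<sigma> a (i a) * h (i a) = \<sigma> (i y) y * h y"
    using obtain_bisection_around_inverse[OF c_lc h_lc, where y = y] by blast
  have products: "m a b \<in> c -` {0}" if "a \<in> D" "b \<in> {x. h x \<noteq> 0}" "s a = r b" for a b
  proof -
    have "c (m a b) = c (i y) + c y"
      using c_mult[OF that(3)] D_deg[OF that(1)] h_deg that(2) h(2) by simp
    then show ?thesis using hom_inv_add[OF c_mult] by simp
  qed
  have "r ` D \<noteq> {}" using D(3) by blast
  then obtain V where V: "open V" "V \<noteq> {}" "V \<subseteq> r ` D"
    and V_isotropy: "\<And>a b. a \<in> D \<Longrightarrow> b \<in> {x. h x \<noteq> 0} \<Longrightarrow> s a = r b \<Longrightarrow> r a \<in> V \<Longrightarrow> s b \<in> V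
      \<Longrightarrow> m a b \<in> unit_space r"
    using effective_avoid_products[OF eff open_fibre_locally_constant[OF c_lc] D(1) h_supp
        products open_range_bisection[OF D(2)]] by blast
  obtain v where "v \<in> V" using V(2) by blast
  then obtain K where K: "compact K" "open_bisection r s K" "v \<in> K" "K \<subseteq> V"
    using obtain_compact_open_bisection[OF V(1)] by blast
  show ?thesis
  proof (rule that[OF D(2,1) K(1)])
    show "open K" using K(2) by (rule open_bisection_open)
    show "K \<noteq> {}" "K \<subseteq> r ` D" using K(3,4) V(3) by auto
    then show "K \<subseteq> unit_space r" using range_in_unit_space by blast
  qed (use D_value V_isotropy K(4) in blast)+
qed

(* Closure of the Steinberg algebra under convolution is not proved here, so the membership
   of the partial products, needed to apply the multiplicativity of \<pi>, is recorded instead. *)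
lemma unit_indicator_in_ideal:
  assumes "cont_hom r s m c" "effective_sub r s (c -` {0})"
    and h: "h \<in> steinberg_hom_component c \<gamma>" "h y \<noteq> 0"
  obtains K a b where "K \<subseteq> unit_space r" "K \<noteq> {}" "compact K" "open K"
    "a \<in> steinberg" "b \<in> steinberg" "h \<star> indicator K \<in> steinberg"
    "b \<star> (h \<star> indicator K) \<in> steinberg" "a \<star> (b \<star> (h \<star> indicator K)) = indicator K"
proof -
  obtain D K where D: "open_bisection r s D" "compact D"
    and K: "compact K" "open K" "K \<noteq> {}" "K \<subseteq> r ` D" "K \<subseteq> unit_space r"
    and inverse_value: "\<And>a. a \<in> D \<Longrightarrow> \<sigma> a (i a) * h (i a) = \<sigma> (i y) y * h y"
    and isotropy: "\<And>a b. a \<in> D \<Longrightarrow> s a = r b \<Longrightarrow> h b \<noteq> 0 \<Longrightarrow> r a \<in> K \<Longrightarrow> s b \<in> K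
      \<Longrightarrow> m a b \<in> unit_space r"
    using obtain_isotropy_free_unit_set[OF assms] by blast
  define \<kappa> where "\<kappa> = \<sigma> (i y) y * h y"
  have "\<kappa> \<noteq> 0"
    using cocycle_nonzero[of "i y" y] h(2) by (simp add: \<kappa>_def source_inv)
  have h_st: "h \<in> steinberg"
    using h(1) by (simp add: steinberg_hom_component_def)
  have "closed K" using K(1) by (rule compact_imp_closed)
  have "h \<star> indicator K = (\<lambda>x. if x \<in> s -` K then h x else 0)"
    using K(5) by (simp add: conv_indicator_unit_right fun_eq_iff split: split_indicator)
  also have "\<dots> \<in> steinberg"
    using h_st open_vimage_source[OF K(2)] closed_vimage_source[OF \<open>closed K\<close>]
    by (rule steinberg_restrict_clopen)
  finally have right_st: "h \<star> indicator K \<in> steinberg" .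
  have middle: "indicator (D \<inter> r -` K) \<star> (h \<star> indicator K) = (\<lambda>x. \<kappa> * indicator K x)"
    using inj_on_range_bisection[OF D(1)] K(4,5) inverse_value[unfolded \<kappa>_def[symmetric]] isotropy
    by (rule conv_bisection_scaled_indicator)
  have K_st: "(indicator K :: 'g \<Rightarrow> 'k) \<in> steinberg"
    using K(1,2) by (rule indicator_in_steinberg)
  have D_st: "indicator (D \<inter> r -` K) \<in> steinberg"
    using open_bisection_open[OF D(1)] open_vimage_range[OF K(2)]
      closed_vimage_range[OF \<open>closed K\<close>] D(2)
    by (intro indicator_in_steinberg compact_Int_closed open_Int)
  have inverse_st: "(\<lambda>x. inverse \<kappa> * indicator K x) \<in> steinberg"
    using K_st by (rule steinberg_scale)
  have inverse: "(\<lambda>x. inverse \<kappa> * indicator K x) \<star> (\<lambda>x. \<kappa> * indicator K x) = indicator K"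
    using conv_scaled_unit_indicators[OF K(5), of "inverse \<kappa>" \<kappa>] \<open>\<kappa> \<noteq> 0\<close> by simp
  show ?thesis
  proof (rule that[OF K(5,3,1,2) inverse_st D_st right_st])
    show "indicator (D \<inter> r -` K) \<star> (h \<star> indicator K) \<in> steinberg"
      unfolding middle using K_st by (rule steinberg_scale)
    show "(\<lambda>x. inverse \<kappa> * indicator K x) \<star> (indicator (D \<inter> r -` K) \<star> (h \<star> indicator K))
        = indicator K"
      unfolding middle by (rule inverse)
  qed
qed

end

section \<open>Graded homomorphisms\<close>

definition homogeneous_part :: "('g \<Rightarrow> 'c) \<Rightarrow> 'c \<Rightarrow> ('g \<Rightarrow> 'k) \<Rightarrow> 'g \<Rightarrow> 'k::zero" where
  "homogeneous_part c \<gamma> f = (\<lambda>x. if c x = \<gamma> then f x else 0)"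

lemma homogeneous_part_in_component:
  assumes "locally_constant_on UNIV c" "f \<in> steinberg"
  shows "homogeneous_part c \<gamma> f \<in> steinberg_hom_component c \<gamma>"
proof -
  have "(\<lambda>x. if x \<in> c -` {\<gamma>} then f x else 0) \<in> steinberg"
    using assms(2) open_fibre_locally_constant[OF assms(1)] closed_fibre_locally_constant[OF assms(1)]
    by (rule steinberg_restrict_clopen)
  then show ?thesis
    unfolding steinberg_hom_component_def homogeneous_part_def by auto
qed

lemma homogeneous_part_outside_support:
  "\<gamma> \<notin> c ` {x. f x \<noteq> 0} \<Longrightarrow> homogeneous_part c \<gamma> f = (\<lambda>x. 0)"
  by (auto simp: homogeneous_part_def fun_eq_iff)

lemma sum_homogeneous_parts:
  assumes "finite (c ` {x. f x \<noteq> 0})"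
  shows "(\<lambda>x. \<Sum>\<gamma>\<in>c ` {x. f x \<noteq> 0}. homogeneous_part c \<gamma> f x) = f"
proof
  fix x
  show "(\<Sum>\<gamma>\<in>c ` {x. f x \<noteq> 0}. homogeneous_part c \<gamma> f x) = f x"
  proof (cases "f x = 0")
    case True
    then have "homogeneous_part c \<gamma> f x = 0" for \<gamma>
      by (simp add: homogeneous_part_def)
    then show ?thesis using True by simp
  next
    case False
    then have "c x \<in> c ` {x. f x \<noteq> 0}" by blast
    then show ?thesis using assms by (simp add: homogeneous_part_def)
  qed
qed

lemma graded_ring_components_zero:
  fixes Qg :: "'c::group_add \<Rightarrow> 'q::ring set"
  assumes graded: "graded_ring Qg" and "finite A" "\<And>\<gamma>. \<gamma> \<in> A \<Longrightarrow> q \<gamma> \<in> Qg \<gamma>"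
    and "(\<Sum>\<gamma>\<in>A. q \<gamma>) = 0" "\<gamma> \<in> A"
  shows "q \<gamma> = 0"
proof -
  define decomposes_0 where "decomposes_0 = (\<lambda>h::'c \<Rightarrow> 'q.
    finite {\<gamma>. h \<gamma> \<noteq> 0} \<and> (\<forall>\<gamma>. h \<gamma> \<in> Qg \<gamma>) \<and> 0 = (\<Sum>\<gamma>\<in>{\<gamma>. h \<gamma> \<noteq> 0}. h \<gamma>))"
  have unique: "\<exists>!h. decomposes_0 h"
    using graded unfolding graded_ring_def decomposes_0_def by blast
  define q' where "q' = (\<lambda>\<gamma>. if \<gamma> \<in> A then q \<gamma> else 0)"
  have "decomposes_0 q'"
    unfolding decomposes_0_def
  proof (intro conjI)
    show "finite {\<gamma>. q' \<gamma> \<noteq> 0}"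
      using assms(2) by (rule rev_finite_subset) (auto simp: q'_def)
    show "\<forall>\<gamma>. q' \<gamma> \<in> Qg \<gamma>"
      using graded assms(3) by (auto simp: q'_def graded_ring_def)
    have "(\<Sum>\<gamma>\<in>{\<gamma>. q' \<gamma> \<noteq> 0}. q' \<gamma>) = (\<Sum>\<gamma>\<in>A. q' \<gamma>)"
      using assms(2) by (intro sum.mono_neutral_left) (auto simp: q'_def)
    then show "0 = (\<Sum>\<gamma>\<in>{\<gamma>. q' \<gamma> \<noteq> 0}. q' \<gamma>)"
      using assms(4) by (simp add: q'_def)
  qed
  moreover have "decomposes_0 (\<lambda>_. 0)"
    using graded unfolding decomposes_0_def graded_ring_def by simp
  ultimately have "q' = (\<lambda>_. 0)"
    using unique by blast
  then show ?thesis
    using assms(5) by (metis q'_def)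
qed

locale graded_steinberg_hom = twisted_ample_groupoid r s m i \<sigma>
  for r s :: "'g::t2_space \<Rightarrow> 'g" and m :: "'g \<Rightarrow> 'g \<Rightarrow> 'g" and i :: "'g \<Rightarrow> 'g"
    and \<sigma> :: "'g \<Rightarrow> 'g \<Rightarrow> 'k::field" +
  fixes c :: "'g \<Rightarrow> 'c::group_add" and Qg :: "'c \<Rightarrow> 'q::ring set" and \<pi> :: "('g \<Rightarrow> 'k) \<Rightarrow> 'q"
  assumes degree: "cont_hom r s m c"
    and graded_target: "graded_ring Qg"
    and graded_hom: "graded_ring_hom r s m \<sigma> c Qg \<pi>"
begin

lemma hom_add: "f \<in> steinberg \<Longrightarrow> g \<in> steinberg \<Longrightarrow> \<pi> (\<lambda>x. f x + g x) = \<pi> f + \<pi> g"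
  and hom_mult: "f \<in> steinberg \<Longrightarrow> g \<in> steinberg \<Longrightarrow> \<pi> (f \<star> g) = \<pi> f * \<pi> g"
  and hom_component: "f \<in> steinberg_hom_component c \<gamma> \<Longrightarrow> \<pi> f \<in> Qg \<gamma>"
  using graded_hom unfolding graded_ring_hom_def by blast+

lemma hom_zero: "\<pi> (\<lambda>x. 0) = 0"
  using hom_add[OF steinberg_zero steinberg_zero] by simp

lemma hom_sum:
  "finite A \<Longrightarrow> (\<And>a. a \<in> A \<Longrightarrow> F a \<in> steinberg) \<Longrightarrow> \<pi> (\<lambda>x. \<Sum>a\<in>A. F a x) = (\<Sum>a\<in>A. \<pi> (F a))"
proof (induction A rule: finite_induct)
  case empty
  then show ?case by (simp add: hom_zero)
next
  case (insert a A)
  then have "\<pi> (\<lambda>x. F a x + (\<Sum>a\<in>A. F a x)) = \<pi> (F a) + \<pi> (\<lambda>x. \<Sum>a\<in>A. F a x)"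
    by (intro hom_add steinberg_sum) auto
  then show ?case using insert by simp
qed

lemma inj_on_steinberg_iff_kernel:
  "inj_on \<pi> steinberg \<longleftrightarrow> (\<forall>f\<in>steinberg. \<pi> f = 0 \<longrightarrow> f = (\<lambda>x. 0))"
proof
  assume "inj_on \<pi> steinberg"
  then show "\<forall>f\<in>steinberg. \<pi> f = 0 \<longrightarrow> f = (\<lambda>x. 0)"
    using hom_zero steinberg_zero by (metis inj_onD)
next
  assume kernel: "\<forall>f\<in>steinberg. \<pi> f = 0 \<longrightarrow> f = (\<lambda>x. 0)"
  show "inj_on \<pi> steinberg"
  proof (rule inj_onI)
    fix f g assume f: "f \<in> steinberg" and g: "g \<in> steinberg" and "\<pi> f = \<pi> g"
    have diff: "(\<lambda>x. f x - g x) \<in> steinberg"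
      using f g by (rule steinberg_diff)
    have "\<pi> f = \<pi> (\<lambda>x. f x - g x) + \<pi> g"
      using hom_add[OF diff g] by simp
    then have "(\<lambda>x. f x - g x) = (\<lambda>x. 0)"
      using kernel diff \<open>\<pi> f = \<pi> g\<close> by simp
    then show "f = g" by (auto simp: fun_eq_iff)
  qed
qed

lemma kernel_homogeneous_part:
  assumes "f \<in> steinberg" "\<pi> f = 0"
  shows "\<pi> (homogeneous_part c \<gamma> f) = 0"
proof -
  have c_lc: "locally_constant_on UNIV c"
    using degree unfolding cont_hom_def by blast
  let ?\<Gamma> = "c ` {x. f x \<noteq> 0}"
  have "finite ?\<Gamma>"
    using finite_image_compact_locally_constant[OF c_lc] assms(1) by (simp add: steinberg_iff)
  have parts: "homogeneous_part c \<delta> f \<in> steinberg_hom_component c \<delta>" for \<delta>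
    by (rule homogeneous_part_in_component[OF c_lc assms(1)])
  then have parts_st: "homogeneous_part c \<delta> f \<in> steinberg" for \<delta>
    by (simp add: steinberg_hom_component_def)
  show ?thesis
  proof (cases "\<gamma> \<in> ?\<Gamma>")
    case True
    have "\<pi> f = \<pi> (\<lambda>x. \<Sum>\<delta>\<in>?\<Gamma>. homogeneous_part c \<delta> f x)"
      by (simp only: sum_homogeneous_parts[OF \<open>finite ?\<Gamma>\<close>])
    also have "\<dots> = (\<Sum>\<delta>\<in>?\<Gamma>. \<pi> (homogeneous_part c \<delta> f))"
      using hom_sum[OF \<open>finite ?\<Gamma>\<close>, of "\<lambda>\<delta>. homogeneous_part c \<delta> f"] parts_st by simp
    finally have "(\<Sum>\<delta>\<in>?\<Gamma>. \<pi> (homogeneous_part c \<delta> f)) = \<pi> f" ..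
    then show ?thesis
      using graded_ring_components_zero[OF graded_target \<open>finite ?\<Gamma>\<close> hom_component[OF parts] _ True]
        assms(2) by simp
  next
    case False
    then show ?thesis by (simp add: homogeneous_part_outside_support hom_zero)
  qed
qed

lemma indicator_not_in_kernel:
  assumes "inj_on \<pi> steinberg" "compact K" "open K" "x \<in> K"
  shows "\<pi> (indicator K) \<noteq> 0"
proof
  assume "\<pi> (indicator K) = 0"
  then have "indicator K = (\<lambda>x. 0::'k)"
    using assms(1) indicator_in_steinberg[OF assms(2,3)] inj_on_steinberg_iff_kernel by blast
  from fun_cong[OF this, of x] assms(4) show False by simp
qed

lemma kernel_contains_unit_indicator:
  assumes eff: "effective_sub r s (c -` {0})"
    and "f \<in> steinberg" "\<pi> f = 0" "f \<noteq> (\<lambda>x. 0)"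
  obtains K where "K \<subseteq> unit_space r" "K \<noteq> {}" "compact K" "open K" "\<pi> (indicator K) = 0"
proof -
  have c_lc: "locally_constant_on UNIV c"
    using degree unfolding cont_hom_def by blast
  obtain y where "f y \<noteq> 0" using assms(4) by auto
  let ?h = "homogeneous_part c (c y) f"
  have "?h \<in> steinberg_hom_component c (c y)"
    by (rule homogeneous_part_in_component[OF c_lc assms(2)])
  moreover have "?h y \<noteq> 0"
    using \<open>f y \<noteq> 0\<close> by (simp add: homogeneous_part_def)
  ultimately obtain K a b where K: "K \<subseteq> unit_space r" "K \<noteq> {}" "compact K" "open K"
    and factors: "a \<in> steinberg" "b \<in> steinberg" "?h \<star> indicator K \<in> steinberg"
      "b \<star> (?h \<star> indicator K) \<in> steinberg"
    and product: "a \<star> (b \<star> (?h \<star> indicator K)) = indicator K"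
    by (rule unit_indicator_in_ideal[OF degree eff])
  have "?h \<in> steinberg" "(indicator K :: 'g \<Rightarrow> 'k) \<in> steinberg"
    using \<open>?h \<in> steinberg_hom_component c (c y)\<close> indicator_in_steinberg[OF K(3,4)]
    by (simp_all add: steinberg_hom_component_def)
  have "\<pi> (indicator K) = \<pi> (a \<star> (b \<star> (?h \<star> indicator K)))"
    by (simp only: product)
  also have "\<dots> = \<pi> a * (\<pi> b * (\<pi> ?h * \<pi> (indicator K)))"
    using factors \<open>?h \<in> steinberg\<close> \<open>(indicator K :: 'g \<Rightarrow> 'k) \<in> steinberg\<close> by (simp add: hom_mult)
  also have "\<dots> = 0"
    using kernel_homogeneous_part[OF assms(2,3)] by simp
  finally show ?thesis using that K by blast
qed

end

theorem theorem7p2: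
  fixes r s :: "'g::t2_space \<Rightarrow> 'g" and m :: "'g \<Rightarrow> 'g \<Rightarrow> 'g" and i :: "'g \<Rightarrow> 'g"
    and \<sigma> :: "'g \<Rightarrow> 'g \<Rightarrow> 'k::field"
    and c :: "'g \<Rightarrow> 'c::group_add"
    and Qg :: "'c \<Rightarrow> 'q::ring set"
    and \<pi> :: "('g \<Rightarrow> 'k) \<Rightarrow> 'q"
  assumes "lch_top_groupoid r s m i"
    and "ample r s"
    and "cont_2cocycle r s m \<sigma>"
    and "cont_hom r s m c"
    and "effective_sub r s (c -` {0})"
    and "graded_ring Qg"
    and "graded_ring_hom r s m \<sigma> c Qg \<pi>"
  shows "inj_on \<pi> steinberg \<longleftrightarrow>
    (\<forall>K. K \<subseteq> unit_space r \<and> K \<noteq> {} \<and> compact K \<and> openin (top_of_set (unit_space r)) K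
         \<longrightarrow> \<pi> (indicator K) \<noteq> 0)"
proof -
  interpret graded_steinberg_hom r s m i \<sigma> c Qg \<pi>
    using assms by unfold_locales blast+
  have open_units: "openin (top_of_set (unit_space r)) K \<longleftrightarrow> open K" if "K \<subseteq> unit_space r" for K
    using openin_open_eq[OF open_unit_space] that by blast
  show ?thesis
  proof
    assume "inj_on \<pi> steinberg"
    then show "\<forall>K. K \<subseteq> unit_space r \<and> K \<noteq> {} \<and> compact K \<and> openin (top_of_set (unit_space r)) K
        \<longrightarrow> \<pi> (indicator K) \<noteq> 0"
      using indicator_not_in_kernel open_units by blast
  next
    assume nonzero: "\<forall>K. K \<subseteq> unit_space r \<and> K \<noteq> {} \<and> compact K
        \<and> openin (top_of_set (unit_space r)) K \<longrightarrow> \<pi> (indicator K) \<noteq> 0"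
    show "inj_on \<pi> steinberg"
      unfolding inj_on_steinberg_iff_kernel
    proof (intro ballI impI)
      fix f assume f: "f \<in> steinberg" "\<pi> f = 0"
      show "f = (\<lambda>x. 0)"
      proof (rule ccontr)
        assume "f \<noteq> (\<lambda>x. 0)"
        then obtain K where "K \<subseteq> unit_space r" "K \<noteq> {}" "compact K" "open K" "\<pi> (indicator K) = 0"
          using kernel_contains_unit_indicator[OF assms(5) f] by blast
        then show False using nonzero open_units by blast
      qed
    qed
  qed
qed

end
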